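(* Fix $C_1,C_2$ with $C_1>C_2>0$ and fix $C_3\in(0,C_{3,crit})$. Then $\mathfrak L(C_1,C_2,C_3,b)$ is strictly increasing in $b$ on $(b_-(C_3),b_+(C_3))$.
   Context: Let real constants $C_1,C_2$ be given with $2C_1+C_2>0$, and let $C_{3,crit}=\frac1{27}(2C_1+C_2)^3$. For $C_3\in(0,C_{3,crit})$, let $\phi_1<\phi_2<\phi_3$ be the roots of $2(\phi-C_1)^2(\phi+\frac{C_2}2)=C_3$; they satisfy $-\frac{C_2}{2}<\phi_1<\frac{C_1-C_2}{3}<\phi_2<C_1<\phi_3$. Let $U(\phi)=-\frac12\phi^2-\frac12C_2\phi-\frac12C_1C_2-\frac{C_3}{2(\phi-C_1)}$. Set $b_-(C_3)=U(\phi_2)$ and $b_+(C_3)=U(\phi_1)$. For $b\in(b_-(C_3),b_+(C_3))$, let $\phi_-<\phi_+$ be the two solutions of $U(\phi)=b$ with $\phi_1<\phi_-<\phi_2<\phi_+<C_1$. Define $$\mathfrak L(C_1,C_2,C_3,b)=2\int_{\phi_-}^{\phi_+}\frac{d\phi}{\sqrt{2(b-U(\phi))}}.$$ This is the period of the periodic orbit of $\frac12\dot\phi^2+U(\phi)=b$, which describes travelling waves of the DGH equation. *)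

theory Defs
  imports "HOL-Analysis.Analysis"
begin

definition C3crit :: "real \<Rightarrow> real \<Rightarrow> real" where
  "C3crit C1 C2 = (2*C1 + C2)^3 / 27"

definition cubicP :: "real \<Rightarrow> real \<Rightarrow> real \<Rightarrow> real" where
  "cubicP C1 C2 \<phi> = 2 * (\<phi> - C1)^2 * (\<phi> + C2/2)"

definition phi1 :: "real \<Rightarrow> real \<Rightarrow> real \<Rightarrow> real" where
  "phi1 C1 C2 C3 = (THE \<phi>. -C2/2 < \<phi> \<and> \<phi> < (C1 - C2)/3 \<and> cubicP C1 C2 \<phi> = C3)"

definition phi2 :: "real \<Rightarrow> real \<Rightarrow> real \<Rightarrow> real" where
  "phi2 C1 C2 C3 = (THE \<phi>. (C1 - C2)/3 < \<phi> \<and> \<phi> < C1 \<and> cubicP C1 C2 \<phi> = C3)"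

definition U :: "real \<Rightarrow> real \<Rightarrow> real \<Rightarrow> real \<Rightarrow> real" where
  "U C1 C2 C3 \<phi> = - (\<phi>^2)/2 - C2*\<phi>/2 - C1*C2/2 - C3 / (2*(\<phi> - C1))"

definition bminus :: "real \<Rightarrow> real \<Rightarrow> real \<Rightarrow> real" where
  "bminus C1 C2 C3 = U C1 C2 C3 (phi2 C1 C2 C3)"

definition bplus :: "real \<Rightarrow> real \<Rightarrow> real \<Rightarrow> real" where
  "bplus C1 C2 C3 = U C1 C2 C3 (phi1 C1 C2 C3)"

definition phim :: "real \<Rightarrow> real \<Rightarrow> real \<Rightarrow> real \<Rightarrow> real" where
  "phim C1 C2 C3 b = (THE \<phi>. phi1 C1 C2 C3 < \<phi> \<and> \<phi> < phi2 C1 C2 C3 \<and> U C1 C2 C3 \<phi> = b)"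

definition phip :: "real \<Rightarrow> real \<Rightarrow> real \<Rightarrow> real \<Rightarrow> real" where
  "phip C1 C2 C3 b = (THE \<phi>. phi2 C1 C2 C3 < \<phi> \<and> \<phi> < C1 \<and> U C1 C2 C3 \<phi> = b)"

text \<open>Period of the orbit; the integrand is singular (integrably) at the endpoints,
  where it takes the value 0 by HOL's division convention (a null set).\<close>
definition period :: "real \<Rightarrow> real \<Rightarrow> real \<Rightarrow> real \<Rightarrow> real" where
  "period C1 C2 C3 b = 2 * integral {phim C1 C2 C3 b .. phip C1 C2 C3 b}
      (\<lambda>\<phi>. 1 / sqrt (2 * (b - U C1 C2 C3 \<phi>)))"

end

theory Submission
  imports Defs
begin

text \<open>For b in the range, 2 (b - U \<phi>) (C1 - \<phi>) is a cubic in \<phi> with roots \<phi>_- < \<phi>_+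
  and a third root r < \<phi>_1, so that C1 - C2 = \<phi>_- + \<phi>_+ + r and C3 = (C1 - \<phi>_-) (C1 - \<phi>_+) (C1 - r).
  The substitution \<phi> = (\<phi>_- + \<phi>_+)/2 - (\<phi>_+ - \<phi>_-)/2 cos t turns the period into
  2 \<integral> sqrt ((C1 - \<phi>)/(\<phi> - r)) dt over t \<in> [0, \<pi>]. Adding the integrand at t and at \<pi> - t
  gives, for fixed cos t ^ 2, a function of \<rho> = C1 - r alone, because \<alpha> = C1 - \<phi>_- and
  \<gamma> = C1 - \<phi>_+ satisfy \<alpha> + \<gamma> = 2 C1 + C2 - \<rho> and \<alpha> \<gamma> = C3 / \<rho>. Its square is
  -2 + 2 A + 2 sqrt (1 - E) with rational functions A strictly decreasing and E nondecreasing
  in \<rho>. Finally r increases with b, since the cubic increases with b at every \<phi> < C1; so \<rho>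
  decreases and the period increases.\<close>

lemma the_unique_root:
  fixes f :: "real \<Rightarrow> 'a"
  assumes "lo < x" "x < hi" "f x = y"
    and injective: "\<And>s t. lo < s \<Longrightarrow> s < t \<Longrightarrow> t < hi \<Longrightarrow> f s \<noteq> f t"
  shows "(THE x. lo < x \<and> x < hi \<and> f x = y) = x"
proof (rule the_equality)
  show "lo < x \<and> x < hi \<and> f x = y" using assms(1-3) by blast
next
  fix z assume "lo < z \<and> z < hi \<and> f z = y"
  with assms(1-3) injective[of z x] injective[of x z] show "z = x"
    by (metis linorder_neqE_linordered_idom)
qed


lemma integral_symmetrise:
  fixes f :: "real \<Rightarrow> real"
  assumes f: "continuous_on {a..b} f" and "a \<le> b"
  shows "2 * integral {a..b} f = integral {a..b} (\<lambda>t. f t + f (a + b - t))"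
proof -
  have "((\<lambda>t. (-1) *\<^sub>R f (a + b - t)) has_integral
      integral {a + b - a..a + b - b} f - integral {a + b - b..a + b - a} f) {a..b}"
  proof (rule has_integral_substitution_general[of "{}" a b _ a b])
    show "\<And>t. t \<in> {a..b} - {} \<Longrightarrow> ((\<lambda>t. a + b - t) has_real_derivative -1) (at t within {a..b})"
      by (auto intro!: derivative_eq_intros)
  qed (use f \<open>a \<le> b\<close> in \<open>auto intro!: continuous_intros\<close>)
  moreover have "integral {b..a} f = 0" using \<open>a \<le> b\<close> by (cases "a = b") auto
  ultimately have "((\<lambda>t. - f (a + b - t)) has_integral - integral {a..b} f) {a..b}" by simp
  from has_integral_neg[OF this]
  have "((\<lambda>t. f (a + b - t)) has_integral integral {a..b} f) {a..b}" by simp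
  moreover have "(f has_integral integral {a..b} f) {a..b}"
    using f by (intro integrable_integral integrable_continuous_interval)
  ultimately have "((\<lambda>t. f t + f (a + b - t)) has_integral (integral {a..b} f + integral {a..b} f)) {a..b}"
    by (intro has_integral_add)
  then show ?thesis by (simp add: integral_unique)
qed

section \<open>The symmetrised integrand\<close>

text \<open>\<rho> is the largest of three positive numbers \<gamma> < \<alpha> < \<rho> with \<alpha> + \<gamma> + \<rho> = \<sigma> and \<alpha> \<gamma> \<rho> = k:
  the last two conditions say (\<sigma> - \<rho>)^2 > 4 k / \<rho> and (\<rho> - \<alpha>) (\<rho> - \<gamma>) > 0.\<close>
definition admissible :: "real \<Rightarrow> real \<Rightarrow> real \<Rightarrow> bool" where
  "admissible \<sigma> k \<rho> \<longleftrightarrow> \<sigma>/3 < \<rho> \<and> \<rho> < \<sigma> \<and> 4*k < \<rho>*(\<sigma> - \<rho>)^2 \<and> 0 < 2*\<rho>^3 - \<sigma>*\<rho>^2 + k"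

lemma admissible_of_roots:
  assumes "0 < \<gamma>" "\<gamma> < \<alpha>" "\<alpha> < \<rho>" and "\<sigma> = \<alpha> + \<gamma> + \<rho>" "k = \<alpha>*\<gamma>*\<rho>"
  shows "admissible \<sigma> k \<rho>"
proof -
  have "\<rho>*((\<alpha> + \<gamma> + \<rho>) - \<rho>)^2 - 4*(\<alpha>*\<gamma>*\<rho>) = \<rho>*(\<alpha> - \<gamma>)^2"
    by (simp add: algebra_simps power2_eq_square)
  moreover have "0 < \<rho>*(\<alpha> - \<gamma>)^2" using assms by simp
  moreover have "2*\<rho>^3 - (\<alpha> + \<gamma> + \<rho>)*\<rho>^2 + \<alpha>*\<gamma>*\<rho> = \<rho>*(\<rho> - \<alpha>)*(\<rho> - \<gamma>)"
    by (simp add: algebra_simps power2_eq_square power3_eq_cube)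
  moreover have "0 < \<rho>*(\<rho> - \<alpha>)*(\<rho> - \<gamma>)" using assms by simp
  ultimately have "4*(\<alpha>*\<gamma>*\<rho>) < \<rho>*((\<alpha> + \<gamma> + \<rho>) - \<rho>)^2"
    and "0 < 2*\<rho>^3 - (\<alpha> + \<gamma> + \<rho>)*\<rho>^2 + \<alpha>*\<gamma>*\<rho>"
    by linarith+
  then show ?thesis using assms(1-3) unfolding admissible_def assms(4,5) by auto
qed

lemma admissible_between:
  assumes "admissible \<sigma> k y" "admissible \<sigma> k z" "y \<le> x" "x \<le> z"
  shows "admissible \<sigma> k x"
proof -
  have x: "\<sigma>/3 < x" "x < \<sigma>" using assms unfolding admissible_def by auto
  have "z*(\<sigma> - z)^2 \<le> x*(\<sigma> - x)^2"
  proof (rule DERIV_nonpos_imp_nonincreasing[OF \<open>x \<le> z\<close>])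
    fix t assume "x \<le> t" "t \<le> z"
    then have "(\<sigma> - t)*(\<sigma> - 3*t) \<le> 0"
      using x assms(2) unfolding admissible_def by (intro mult_nonneg_nonpos) auto
    moreover have "((\<lambda>t. t*(\<sigma> - t)^2) has_real_derivative ((\<sigma> - t)*(\<sigma> - 3*t))) (at t)"
      by (auto intro!: derivative_eq_intros simp: algebra_simps power2_eq_square)
    ultimately show "\<exists>d. ((\<lambda>t. t*(\<sigma> - t)^2) has_real_derivative d) (at t) \<and> d \<le> 0" by blast
  qed
  moreover have "2*y^3 - \<sigma>*y^2 \<le> 2*x^3 - \<sigma>*x^2"
  proof (rule DERIV_nonneg_imp_nondecreasing[OF \<open>y \<le> x\<close>])
    fix t assume "y \<le> t" "t \<le> x"
    then have "0 \<le> 2*t*(3*t - \<sigma>)"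
      using x assms(1) unfolding admissible_def by (intro mult_nonneg_nonneg) auto
    moreover have "((\<lambda>t. 2*t^3 - \<sigma>*t^2) has_real_derivative (2*t*(3*t - \<sigma>))) (at t)"
      by (auto intro!: derivative_eq_intros simp: algebra_simps power2_eq_square)
    ultimately show "\<exists>d. ((\<lambda>t. 2*t^3 - \<sigma>*t^2) has_real_derivative d) (at t) \<and> 0 \<le> d" by blast
  qed
  ultimately show ?thesis using assms x unfolding admissible_def by auto
qed

text \<open>With \<alpha>, \<gamma>, \<rho> as above and u = cos t ^ 2, one has M = (\<alpha> + \<gamma>)/2 and w = \<bar>cos t\<bar> (\<alpha> - \<gamma>)/2.\<close>
definition sym_integrand :: "real \<Rightarrow> real \<Rightarrow> real \<Rightarrow> real \<Rightarrow> real" where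
  "sym_integrand \<sigma> k u \<rho> =
    (let M = (\<sigma> - \<rho>)/2; w = sqrt (u*(M^2 - k/\<rho>))
     in sqrt ((M + w)/(\<rho> - M - w)) + sqrt ((M - w)/(\<rho> - M + w)))"

lemma sym_integrand_eq:
  assumes "M = (\<sigma> - \<rho>)/2" "w = sqrt (u*(M^2 - k/\<rho>))"
  shows "sym_integrand \<sigma> k u \<rho> = sqrt ((M + w)/(\<rho> - M - w)) + sqrt ((M - w)/(\<rho> - M + w))"
  unfolding sym_integrand_def Let_def assms ..

text \<open>If p and q are the two quotients under the square roots of sym_integrand, then
  p + q = 2 sym_sum - 2 and p q = 1 - sym_prod; unlike w, both are rational in \<rho>.\<close>
definition sym_denom :: "real \<Rightarrow> real \<Rightarrow> real \<Rightarrow> real \<Rightarrow> real" where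
  "sym_denom \<sigma> k u x = x*(3*x - \<sigma>)^2 - u*x*(\<sigma> - x)^2 + 4*u*k"

definition sym_sum :: "real \<Rightarrow> real \<Rightarrow> real \<Rightarrow> real \<Rightarrow> real" where
  "sym_sum \<sigma> k u x = 2*x^2*(3*x - \<sigma>) / sym_denom \<sigma> k u x"

definition sym_prod :: "real \<Rightarrow> real \<Rightarrow> real \<Rightarrow> real \<Rightarrow> real" where
  "sym_prod \<sigma> k u x = 4*x^2*(2*x - \<sigma>) / sym_denom \<sigma> k u x"

lemma sym_denom_pos:
  assumes "admissible \<sigma> k x" "0 \<le> u" "u \<le> 1" "0 < \<sigma>"
  shows "0 < sym_denom \<sigma> k u x"
proof -
  have "sym_denom \<sigma> k u x = (1 - u)*(x*(3*x - \<sigma>)^2) + u*(4*(2*x^3 - \<sigma>*x^2 + k))"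
    unfolding sym_denom_def by (simp add: algebra_simps power2_eq_square power3_eq_cube)
  moreover have "0 < x*(3*x - \<sigma>)^2" "0 < 4*(2*x^3 - \<sigma>*x^2 + k)"
    using assms unfolding admissible_def by auto
  ultimately show ?thesis using assms(2,3)
    by (cases "u = 1") (auto intro!: add_pos_nonneg)
qed

lemma sym_denom_has_derivative:
  "(sym_denom \<sigma> k u has_real_derivative (27*x^2 - 12*\<sigma>*x + \<sigma>^2 - u*(\<sigma>^2 - 4*\<sigma>*x + 3*x^2))) (at x)"
  unfolding sym_denom_def[abs_def]
  by (auto intro!: derivative_eq_intros simp: algebra_simps power2_eq_square)

lemma sym_sum_has_derivative:
  assumes "sym_denom \<sigma> k u x \<noteq> 0"
  shows "(sym_sum \<sigma> k u has_real_derivative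
     (2*x*(-\<sigma>*x*(3*x - \<sigma>)^2 + u*(\<sigma>*x*(5*x - \<sigma>)*(x - \<sigma>) + 4*k*(9*x - 2*\<sigma>))) / (sym_denom \<sigma> k u x)^2))
     (at x)"
proof -
  have f: "((\<lambda>x. 2*x^2*(3*x - \<sigma>)) has_real_derivative (18*x^2 - 4*\<sigma>*x)) (at x)"
    by (auto intro!: derivative_eq_intros simp: algebra_simps power2_eq_square)
  have "(18*x^2 - 4*\<sigma>*x) * sym_denom \<sigma> k u x
      - 2*x^2*(3*x - \<sigma>) * (27*x^2 - 12*\<sigma>*x + \<sigma>^2 - u*(\<sigma>^2 - 4*\<sigma>*x + 3*x^2))
      = 2*x*(-\<sigma>*x*(3*x - \<sigma>)^2 + u*(\<sigma>*x*(5*x - \<sigma>)*(x - \<sigma>) + 4*k*(9*x - 2*\<sigma>)))"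
    unfolding sym_denom_def by (simp add: algebra_simps power2_eq_square power3_eq_cube)
  then show ?thesis
    using DERIV_divide[OF f sym_denom_has_derivative assms] unfolding sym_sum_def[abs_def]
    by (simp add: power2_eq_square)
qed

lemma sym_prod_has_derivative:
  assumes "sym_denom \<sigma> k u x \<noteq> 0"
  shows "(sym_prod \<sigma> k u has_real_derivative
     (4*((3*x - \<sigma>)*x*(\<sigma>*x*(\<sigma> - x)*(1 - u) + 8*u*k)) / (sym_denom \<sigma> k u x)^2)) (at x)"
proof -
  have f: "((\<lambda>x. 4*x^2*(2*x - \<sigma>)) has_real_derivative (24*x^2 - 8*\<sigma>*x)) (at x)"
    by (auto intro!: derivative_eq_intros simp: algebra_simps power2_eq_square)
  have "(24*x^2 - 8*\<sigma>*x) * sym_denom \<sigma> k u x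
      - 4*x^2*(2*x - \<sigma>) * (27*x^2 - 12*\<sigma>*x + \<sigma>^2 - u*(\<sigma>^2 - 4*\<sigma>*x + 3*x^2))
      = 4*((3*x - \<sigma>)*x*(\<sigma>*x*(\<sigma> - x)*(1 - u) + 8*u*k))"
    unfolding sym_denom_def by (simp add: algebra_simps power2_eq_square power3_eq_cube)
  then show ?thesis
    using DERIV_divide[OF f sym_denom_has_derivative assms] unfolding sym_prod_def[abs_def]
    by (simp add: power2_eq_square)
qed

lemma sym_sum_numerator_neg:
  assumes "admissible \<sigma> k x" "0 \<le> u" "u \<le> 1" "0 < \<sigma>" "0 < k"
  shows "-\<sigma>*x*(3*x - \<sigma>)^2 + u*(\<sigma>*x*(5*x - \<sigma>)*(x - \<sigma>) + 4*k*(9*x - 2*\<sigma>)) < 0"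
proof -
  have x: "\<sigma>/3 < x" "x < \<sigma>" "4*k < x*(\<sigma> - x)^2" using assms unfolding admissible_def by auto
  have neg0: "-\<sigma>*x*(3*x - \<sigma>)^2 < 0" using x assms by simp
  have "4*k*(9*x - 2*\<sigma>) < x*(\<sigma> - x)^2*(9*x - 2*\<sigma>)"
    using x by (intro mult_strict_right_mono) auto
  moreover have "4*\<sigma>*x^3 - x*(\<sigma> - x)^2*(9*x - 2*\<sigma>) = x*(3*x - \<sigma>)^2*(2*\<sigma> - x)"
    by (simp add: algebra_simps power2_eq_square power3_eq_cube)
  moreover have "0 \<le> x*(3*x - \<sigma>)^2*(2*\<sigma> - x)" using x assms by simp
  ultimately have neg1: "-4*\<sigma>*x^3 + 4*k*(9*x - 2*\<sigma>) < 0" by linarith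
  have "-\<sigma>*x*(3*x - \<sigma>)^2 + u*(\<sigma>*x*(5*x - \<sigma>)*(x - \<sigma>) + 4*k*(9*x - 2*\<sigma>))
      = (1 - u)*(-\<sigma>*x*(3*x - \<sigma>)^2) + u*(-4*\<sigma>*x^3 + 4*k*(9*x - 2*\<sigma>))"
    by (simp add: algebra_simps power2_eq_square power3_eq_cube)
  also have "\<dots> < 0"
  proof (cases "u = 1")
    case False
    then have "(1 - u)*(-\<sigma>*x*(3*x - \<sigma>)^2) < 0" using neg0 assms(3) by (simp add: mult_pos_neg)
    moreover have "u*(-4*\<sigma>*x^3 + 4*k*(9*x - 2*\<sigma>)) \<le> 0"
      using neg1 assms(2) by (simp add: mult_nonneg_nonpos)
    ultimately show ?thesis by linarith
  qed (use neg1 in simp)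
  finally show ?thesis .
qed

lemma sym_sum_strict_decreasing:
  assumes "admissible \<sigma> k y" "admissible \<sigma> k z" "y < z" "0 \<le> u" "u \<le> 1" "0 < \<sigma>" "0 < k"
  shows "sym_sum \<sigma> k u z < sym_sum \<sigma> k u y"
proof (rule DERIV_neg_imp_decreasing[OF \<open>y < z\<close>])
  fix x assume "y \<le> x" "x \<le> z"
  then have x: "admissible \<sigma> k x" using admissible_between assms(1,2) by blast
  then have "0 < sym_denom \<sigma> k u x" using sym_denom_pos assms by blast
  moreover have "0 < x" using x assms unfolding admissible_def by simp
  then have "2*x*(-\<sigma>*x*(3*x - \<sigma>)^2 + u*(\<sigma>*x*(5*x - \<sigma>)*(x - \<sigma>) + 4*k*(9*x - 2*\<sigma>))) < 0"
    using sym_sum_numerator_neg[OF x assms(4-7)] by (simp add: mult_pos_neg)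
  ultimately have "2*x*(-\<sigma>*x*(3*x - \<sigma>)^2 + u*(\<sigma>*x*(5*x - \<sigma>)*(x - \<sigma>) + 4*k*(9*x - 2*\<sigma>)))
      / (sym_denom \<sigma> k u x)^2 < 0" by (simp add: divide_neg_pos)
  then show "\<exists>d. (sym_sum \<sigma> k u has_real_derivative d) (at x) \<and> d < 0"
    using sym_sum_has_derivative[of \<sigma> k u x] \<open>0 < sym_denom \<sigma> k u x\<close> by (blast dest: order_less_imp_not_eq2)
qed

lemma sym_prod_increasing:
  assumes "admissible \<sigma> k y" "admissible \<sigma> k z" "y \<le> z" "0 \<le> u" "u \<le> 1" "0 < \<sigma>" "0 < k"
  shows "sym_prod \<sigma> k u y \<le> sym_prod \<sigma> k u z"
proof (rule DERIV_nonneg_imp_nondecreasing[OF \<open>y \<le> z\<close>])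
  fix x assume "y \<le> x" "x \<le> z"
  then have x: "admissible \<sigma> k x" using admissible_between assms(1,2) by blast
  then have "0 < sym_denom \<sigma> k u x" using sym_denom_pos assms by blast
  moreover have "0 \<le> (3*x - \<sigma>)*x*(\<sigma>*x*(\<sigma> - x)*(1 - u) + 8*u*k)"
    using x assms unfolding admissible_def by (intro mult_nonneg_nonneg add_nonneg_nonneg) auto
  then have "0 \<le> 4*((3*x - \<sigma>)*x*(\<sigma>*x*(\<sigma> - x)*(1 - u) + 8*u*k)) / (sym_denom \<sigma> k u x)^2"
    by simp
  ultimately show "\<exists>d. (sym_prod \<sigma> k u has_real_derivative d) (at x) \<and> 0 \<le> d"
    using sym_prod_has_derivative[of \<sigma> k u x] by (blast dest: order_less_imp_not_eq2)
qed

lemma sym_integrand_sq: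
  assumes x: "admissible \<sigma> k x" and u: "0 \<le> u" "u \<le> 1" and "0 < \<sigma>" "0 < k"
  shows "0 \<le> sym_integrand \<sigma> k u x"
    and "(sym_integrand \<sigma> k u x)^2 = -2 + 2* sym_sum \<sigma> k u x + 2* sqrt (1 - sym_prod \<sigma> k u x)"
proof -
  define M where "M = (\<sigma> - x)/2"
  define w where "w = sqrt (u*(M^2 - k/x))"
  define Q where "Q = (x - M)^2 - w^2"
  have x_pos: "0 < x" "0 < x - M" "0 < M" and k_lt: "k < M^2*x"
    using x \<open>0 < \<sigma>\<close> unfolding admissible_def M_def by (auto simp: power_divide mult_ac)
  have "0 < k/x" "k/x < M^2" using k_lt x_pos \<open>0 < k\<close> by (auto simp: divide_less_eq)
  then have w0: "0 \<le> w" and w2: "w^2 = u*(M^2 - k/x)" and w_le: "w^2 \<le> M^2 - k/x"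
    using u by (auto simp: w_def mult_left_le_one_le)
  have "(x - M)^2 - (M^2 - k/x) = (2*x^3 - \<sigma>*x^2 + k)/x"
    unfolding M_def using x_pos by (simp add: field_simps power2_eq_square power3_eq_cube)
  moreover have "0 < (2*x^3 - \<sigma>*x^2 + k)/x" using x x_pos unfolding admissible_def by simp
  ultimately have "w^2 < M^2" "w^2 < (x - M)^2" using w_le \<open>0 < k/x\<close> by linarith+
  then have "w < M" "w < x - M" "0 < Q"
    using x_pos unfolding Q_def by (auto intro: power_less_imp_less_base)
  then have pos: "0 \<le> (M + w)/(x - M - w)" "0 \<le> (M - w)/(x - M + w)" and Q: "Q = (x - M - w)*(x - M + w)"
    using w0 by (auto simp: Q_def algebra_simps power2_eq_square)
  have \<sigma>: "\<sigma> = x + 2*M" unfolding M_def by (simp add: field_simps)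
  have denom: "sym_denom \<sigma> k u x = 4*x*Q"
    unfolding sym_denom_def Q_def w2 \<sigma> using x_pos by (simp add: field_simps power2_eq_square)
  have "(M + w)/(x - M - w) + (M - w)/(x - M + w) = ((M + w)*(x - M + w) + (M - w)*(x - M - w))/Q"
    using \<open>w < x - M\<close> w0 unfolding Q by (simp add: field_simps)
  also have "(M + w)*(x - M + w) + (M - w)*(x - M - w) = -2*Q + 2*(x*(x - M))"
    unfolding Q_def by (simp add: algebra_simps power2_eq_square)
  also have "(-2*Q + 2*(x*(x - M)))/Q = -2 + 2* sym_sum \<sigma> k u x"
    unfolding sym_sum_def denom unfolding \<sigma> using \<open>0 < Q\<close> x_pos by (simp add: field_simps power2_eq_square)
  finally have sum: "(M + w)/(x - M - w) + (M - w)/(x - M + w) = -2 + 2* sym_sum \<sigma> k u x" .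
  have "(M + w)/(x - M - w) * ((M - w)/(x - M + w)) = (M + w)*(M - w)/Q" unfolding Q by simp
  also have "(M + w)*(M - w) = Q - x*(x - 2*M)"
    unfolding Q_def by (simp add: algebra_simps power2_eq_square)
  also have "(Q - x*(x - 2*M))/Q = 1 - sym_prod \<sigma> k u x"
    unfolding sym_prod_def denom unfolding \<sigma> using \<open>0 < Q\<close> x_pos by (simp add: field_simps power2_eq_square)
  finally have prod: "(M + w)/(x - M - w) * ((M - w)/(x - M + w)) = 1 - sym_prod \<sigma> k u x" .
  have G: "sym_integrand \<sigma> k u x = sqrt ((M + w)/(x - M - w)) + sqrt ((M - w)/(x - M + w))"
    using M_def w_def by (rule sym_integrand_eq)
  show "0 \<le> sym_integrand \<sigma> k u x" unfolding G using pos by simp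
  show "(sym_integrand \<sigma> k u x)^2 = -2 + 2* sym_sum \<sigma> k u x + 2* sqrt (1 - sym_prod \<sigma> k u x)"
  proof -
    have "(sqrt ((M + w)/(x - M - w)) + sqrt ((M - w)/(x - M + w)))^2
        = (M + w)/(x - M - w) + (M - w)/(x - M + w) + 2 * sqrt ((M + w)/(x - M - w) * ((M - w)/(x - M + w)))"
      using pos by (simp only: power2_sum real_sqrt_mult real_sqrt_pow2)
    then show ?thesis unfolding G sum prod .
  qed
qed

lemma sym_integrand_strict_decreasing:
  assumes "admissible \<sigma> k y" "admissible \<sigma> k z" "y < z" "0 \<le> u" "u \<le> 1" "0 < \<sigma>" "0 < k"
  shows "sym_integrand \<sigma> k u z < sym_integrand \<sigma> k u y"
proof (rule power_less_imp_less_base)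
  have "sym_prod \<sigma> k u y \<le> sym_prod \<sigma> k u z"
    using sym_prod_increasing assms less_imp_le by blast
  then have "sqrt (1 - sym_prod \<sigma> k u z) \<le> sqrt (1 - sym_prod \<sigma> k u y)" by simp
  then show "(sym_integrand \<sigma> k u z)^2 < (sym_integrand \<sigma> k u y)^2"
    using sym_sum_strict_decreasing[OF assms] sym_integrand_sq(2)[OF assms(1,4-7)]
      sym_integrand_sq(2)[OF assms(2,4-7)] by linarith
  show "0 \<le> sym_integrand \<sigma> k u y" using sym_integrand_sq(1)[OF assms(1,4-7)] .
qed


section \<open>The potential and its critical points\<close>

lemma cubicP_has_derivative:
  "(cubicP C1 C2 has_real_derivative (2*(x - C1)*(3*x + C2 - C1))) (at x)"
  unfolding cubicP_def[abs_def]
  by (auto intro!: derivative_eq_intros simp: algebra_simps power2_eq_square)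

lemma U_has_derivative:
  assumes "x \<noteq> C1"
  shows "(U C1 C2 C3 has_real_derivative ((C3 - cubicP C1 C2 x)/(2*(x - C1)^2))) (at x)"
proof -
  have square: "(2*x - 2*C1)*(2*x - 2*C1) = 4*(x - C1)^2" by (simp add: power2_eq_square algebra_simps)
  have "(U C1 C2 C3 has_real_derivative (- x - C2/2 + C3/(2*(x - C1)^2))) (at x)"
    unfolding U_def[abs_def] by (rule derivative_eq_intros refl | simp add: assms)+ (simp add: square)
  moreover have "cubicP C1 C2 x/(2*(x - C1)^2) = x + C2/2"
    using assms by (simp add: cubicP_def)
  then have "- x - C2/2 + C3/(2*(x - C1)^2) = (C3 - cubicP C1 C2 x)/(2*(x - C1)^2)"
    by (simp add: diff_divide_distrib)
  ultimately show ?thesis by simp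
qed

lemma U_continuous_on: "C1 \<notin> S \<Longrightarrow> continuous_on S (U C1 C2 C3)"
  unfolding U_def[abs_def] by (intro continuous_intros) auto

locale dgh_constants =
  fixes C1 C2 C3 :: real
  assumes C2_pos: "0 < C2" and C2_less_C1: "C2 < C1"
    and C3_pos: "0 < C3" and C3_less_crit: "C3 < C3crit C1 C2"
begin

abbreviation "P \<equiv> cubicP C1 C2"
abbreviation "\<phi>\<^sub>0 \<equiv> (C1 - C2)/3"
abbreviation "\<phi>\<^sub>1 \<equiv> phi1 C1 C2 C3"
abbreviation "\<phi>\<^sub>2 \<equiv> phi2 C1 C2 C3"
abbreviation "V \<equiv> U C1 C2 C3"

lemma P_values: "P (-C2/2) = 0" "P \<phi>\<^sub>0 = C3crit C1 C2" "P C1 = 0"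
  by (simp_all add: cubicP_def C3crit_def field_simps power2_eq_square power3_eq_cube)

lemma P_continuous: "continuous_on S P"
  unfolding cubicP_def[abs_def] by (intro continuous_intros)

lemma P_strict_increasing:
  assumes "-C2/2 \<le> x" "x < y" "y \<le> \<phi>\<^sub>0"
  shows "P x < P y"
proof (rule DERIV_pos_imp_increasing_open[OF \<open>x < y\<close> _ P_continuous])
  fix z assume "x < z" "z < y"
  then have "z < C1" "3*z + C2 - C1 < 0" using assms C2_less_C1 by auto
  then have "0 < 2*(z - C1)*(3*z + C2 - C1)" by (simp add: mult_neg_neg)
  then show "\<exists>d. (P has_real_derivative d) (at z) \<and> 0 < d" using cubicP_has_derivative by blast
qed

lemma P_strict_decreasing:
  assumes "\<phi>\<^sub>0 \<le> x" "x < y" "y \<le> C1"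
  shows "P y < P x"
proof (rule DERIV_neg_imp_decreasing_open[OF \<open>x < y\<close> _ P_continuous])
  fix z assume "x < z" "z < y"
  then have "z < C1" "0 < 3*z + C2 - C1" using assms by auto
  then have "2*(z - C1)*(3*z + C2 - C1) < 0" by (simp add: mult_neg_pos)
  then show "\<exists>d. (P has_real_derivative d) (at z) \<and> d < 0" using cubicP_has_derivative by blast
qed

lemma P_isCont: "isCont P x"
  unfolding cubicP_def[abs_def] by (intro continuous_intros)

lemma phi1_bounds: "-C2/2 < \<phi>\<^sub>1" "\<phi>\<^sub>1 < \<phi>\<^sub>0" "P \<phi>\<^sub>1 = C3"
proof -
  have "\<exists>x\<ge>-C2/2. x \<le> \<phi>\<^sub>0 \<and> P x = C3"
    by (rule IVT) (use P_values C3_pos C3_less_crit C2_pos C2_less_C1 P_isCont in auto)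
  then obtain x where x: "-C2/2 \<le> x" "x \<le> \<phi>\<^sub>0" "P x = C3" by blast
  moreover have "x \<noteq> -C2/2" "x \<noteq> \<phi>\<^sub>0"
    using x(3) P_values(1,2) C3_pos C3_less_crit by (metis less_irrefl)+
  ultimately have x': "-C2/2 < x" "x < \<phi>\<^sub>0" by auto
  have "\<phi>\<^sub>1 = x" unfolding phi1_def
  proof (rule the_unique_root)
    fix s t assume "-C2/2 < s" "s < t" "t < \<phi>\<^sub>0"
    then show "P s \<noteq> P t" using P_strict_increasing[of s t] by simp
  qed (use x x' in auto)
  with x x' show "-C2/2 < \<phi>\<^sub>1" "\<phi>\<^sub>1 < \<phi>\<^sub>0" "P \<phi>\<^sub>1 = C3" by auto
qed

lemma phi2_bounds: "\<phi>\<^sub>0 < \<phi>\<^sub>2" "\<phi>\<^sub>2 < C1" "P \<phi>\<^sub>2 = C3"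
proof -
  have "\<exists>x\<ge>\<phi>\<^sub>0. x \<le> C1 \<and> P x = C3"
    by (rule IVT2) (use P_values C3_pos C3_less_crit C2_pos C2_less_C1 P_isCont in auto)
  then obtain x where x: "\<phi>\<^sub>0 \<le> x" "x \<le> C1" "P x = C3" by blast
  moreover have "x \<noteq> \<phi>\<^sub>0" "x \<noteq> C1"
    using x(3) P_values(2,3) C3_pos C3_less_crit by (metis less_irrefl)+
  ultimately have x': "\<phi>\<^sub>0 < x" "x < C1" by auto
  have "\<phi>\<^sub>2 = x" unfolding phi2_def
  proof (rule the_unique_root)
    fix s t assume "\<phi>\<^sub>0 < s" "s < t" "t < C1"
    then show "P s \<noteq> P t" using P_strict_decreasing[of s t] by simp
  qed (use x x' in auto)
  with x x' show "\<phi>\<^sub>0 < \<phi>\<^sub>2" "\<phi>\<^sub>2 < C1" "P \<phi>\<^sub>2 = C3" by auto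
qed

lemma P_greater_between: "\<phi>\<^sub>1 < x \<Longrightarrow> x < \<phi>\<^sub>2 \<Longrightarrow> C3 < P x"
  using P_strict_increasing[of \<phi>\<^sub>1 x] P_strict_decreasing[of x \<phi>\<^sub>2] phi1_bounds phi2_bounds
  by (cases "x \<le> \<phi>\<^sub>0") auto

lemma P_less_right: "\<phi>\<^sub>2 < x \<Longrightarrow> x < C1 \<Longrightarrow> P x < C3"
  using P_strict_decreasing[of \<phi>\<^sub>2 x] phi2_bounds by auto

lemma U_strict_decreasing:
  assumes "\<phi>\<^sub>1 \<le> x" "x < y" "y \<le> \<phi>\<^sub>2"
  shows "V y < V x"
proof (rule DERIV_neg_imp_decreasing_open[OF \<open>x < y\<close>])
  fix z assume "x < z" "z < y"
  then have "z \<noteq> C1" "C3 < P z" using assms phi2_bounds P_greater_between by auto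
  then show "\<exists>d. (V has_real_derivative d) (at z) \<and> d < 0"
    using U_has_derivative by (intro exI[of _ "(C3 - P z)/(2*(z - C1)^2)"]) (auto simp: divide_neg_pos)
qed (use assms phi2_bounds in \<open>auto intro!: U_continuous_on\<close>)

lemma U_strict_increasing:
  assumes "\<phi>\<^sub>2 \<le> x" "x < y" "y < C1"
  shows "V x < V y"
proof (rule DERIV_pos_imp_increasing_open[OF \<open>x < y\<close>])
  fix z assume "x < z" "z < y"
  then have "z \<noteq> C1" "P z < C3" using assms P_less_right by auto
  then show "\<exists>d. (V has_real_derivative d) (at z) \<and> 0 < d"
    using U_has_derivative by (intro exI[of _ "(C3 - P z)/(2*(z - C1)^2)"]) (auto intro!: divide_pos_pos)
qed (use assms in \<open>auto intro!: U_continuous_on\<close>)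

lemma U_tendsto_at_left_C1: "filterlim (\<lambda>e. V (C1 - e)) at_top (at_right 0)"
proof -
  have "V (C1 - e) = - ((C1 - e)^2 + C2*(C1 - e) + C1*C2)/2 + C3/(2*e)" for e
    by (simp add: U_def field_simps)
  moreover have "filterlim (\<lambda>e. - ((C1 - e)^2 + C2*(C1 - e) + C1*C2)/2 + C3/(2*e)) at_top (at_right 0)"
  proof (rule filterlim_tendsto_add_at_top)
    show "((\<lambda>e. - ((C1 - e)^2 + C2*(C1 - e) + C1*C2)/2) \<longlongrightarrow> - (C1^2 + C2*C1 + C1*C2)/2)
        (at_right 0)"
      by (auto intro!: tendsto_eq_intros)
    have "filterlim (\<lambda>e. C3/2 * inverse e) at_top (at_right 0)"
      by (rule filterlim_tendsto_pos_mult_at_top[OF tendsto_const _ filterlim_inverse_at_top_right])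
        (use C3_pos in simp)
    then show "filterlim (\<lambda>e. C3/(2*e)) at_top (at_right 0)" by (simp add: field_simps)
  qed
  ultimately show ?thesis by simp
qed

lemma U_exceeds_near_C1:
  assumes "p < C1"
  obtains q where "p < q" "q < C1" "b < V q"
proof -
  have "\<forall>\<^sub>F e in at_right 0. b < V (C1 - e)"
    using U_tendsto_at_left_C1 by (simp add: filterlim_at_top_dense)
  moreover have "\<forall>\<^sub>F e in at_right 0. e \<in> {0<..<C1 - p}"
    using assms by (intro eventually_at_right_real) simp
  ultimately obtain e where "b < V (C1 - e)" "e \<in> {0<..<C1 - p}"
    using eventually_happens[OF eventually_conj] by fastforce
  then show ?thesis using that[of "C1 - e"] by auto
qed

definition orbit_cubic :: "real \<Rightarrow> real \<Rightarrow> real" where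
  "orbit_cubic b x = (C1 - x)*(2*b + x^2 + C2*x + C1*C2) - C3"

lemma orbit_cubic_eq: "x \<noteq> C1 \<Longrightarrow> orbit_cubic b x = 2*(C1 - x)*(b - V x)"
  unfolding orbit_cubic_def U_def by (simp add: field_simps)

lemma orbit_cubic_shift: "orbit_cubic b' x = orbit_cubic b x + 2*(b' - b)*(C1 - x)"
  unfolding orbit_cubic_def by (simp add: algebra_simps)

lemma orbit_cubic_factor:
  assumes "orbit_cubic b a = 0" "orbit_cubic b c = 0" "a \<noteq> c"
  shows "orbit_cubic b x = -((x - a)*(x - c)*(x - (C1 - C2 - a - c)))"
proof -
  define D where "D x = orbit_cubic b x + (x - a)*(x - c)*(x - (C1 - C2 - a - c))" for x
  \<comment> \<open>the cubic and quadratic terms cancel, so D is affine and vanishes at a and c\<close>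
  have "D x * (c - a) = D a * (c - x) + D c * (x - a)"
    unfolding D_def orbit_cubic_def by (simp add: algebra_simps power2_eq_square)
  moreover have "D a = 0" "D c = 0" using assms unfolding D_def by auto
  ultimately show ?thesis using assms(3) unfolding D_def by simp
qed

end


section \<open>A single periodic orbit\<close>

locale dgh_orbit = dgh_constants +
  fixes b :: real
  assumes b_range: "bminus C1 C2 C3 < b" "b < bplus C1 C2 C3"
begin

abbreviation "\<phi>\<^sub>m \<equiv> phim C1 C2 C3 b"
abbreviation "\<phi>\<^sub>p \<equiv> phip C1 C2 C3 b"

lemma phim_bounds: "\<phi>\<^sub>1 < \<phi>\<^sub>m" "\<phi>\<^sub>m < \<phi>\<^sub>2" "V \<phi>\<^sub>m = b"
proof -
  have "\<exists>x. \<phi>\<^sub>1 \<le> x \<and> x \<le> \<phi>\<^sub>2 \<and> V x = b"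
    by (rule IVT2')
      (use b_range phi1_bounds phi2_bounds in \<open>auto simp: bminus_def bplus_def intro!: U_continuous_on\<close>)
  then obtain x where x: "\<phi>\<^sub>1 \<le> x" "x \<le> \<phi>\<^sub>2" "V x = b" by blast
  moreover have "x \<noteq> \<phi>\<^sub>1" "x \<noteq> \<phi>\<^sub>2" using x(3) b_range unfolding bminus_def bplus_def by auto
  ultimately have x': "\<phi>\<^sub>1 < x" "x < \<phi>\<^sub>2" by auto
  have "\<phi>\<^sub>m = x" unfolding phim_def
  proof (rule the_unique_root)
    fix s t assume "\<phi>\<^sub>1 < s" "s < t" "t < \<phi>\<^sub>2"
    then show "V s \<noteq> V t" using U_strict_decreasing[of s t] by simp
  qed (use x x' in auto)
  with x x' show "\<phi>\<^sub>1 < \<phi>\<^sub>m" "\<phi>\<^sub>m < \<phi>\<^sub>2" "V \<phi>\<^sub>m = b" by auto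
qed

lemma phip_bounds: "\<phi>\<^sub>2 < \<phi>\<^sub>p" "\<phi>\<^sub>p < C1" "V \<phi>\<^sub>p = b"
proof -
  obtain q where q: "\<phi>\<^sub>2 < q" "q < C1" "b < V q"
    using U_exceeds_near_C1 phi2_bounds by blast
  have "\<exists>x. \<phi>\<^sub>2 \<le> x \<and> x \<le> q \<and> V x = b"
    by (rule IVT') (use b_range q in \<open>auto simp: bminus_def intro!: U_continuous_on\<close>)
  then obtain x where x: "\<phi>\<^sub>2 \<le> x" "x \<le> q" "V x = b" by blast
  moreover have "x \<noteq> \<phi>\<^sub>2" "x \<noteq> q" using x(3) b_range q unfolding bminus_def by auto
  ultimately have x': "\<phi>\<^sub>2 < x" "x < C1" using q by auto
  have "\<phi>\<^sub>p = x" unfolding phip_def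
  proof (rule the_unique_root)
    fix s t assume "\<phi>\<^sub>2 < s" "s < t" "t < C1"
    then show "V s \<noteq> V t" using U_strict_increasing[of s t] by simp
  qed (use x x' in auto)
  with x x' show "\<phi>\<^sub>2 < \<phi>\<^sub>p" "\<phi>\<^sub>p < C1" "V \<phi>\<^sub>p = b" by auto
qed

definition third_root :: real where
  "third_root = C1 - C2 - \<phi>\<^sub>m - \<phi>\<^sub>p"

abbreviation "r \<equiv> third_root"

lemma orbit_cubic_roots: "orbit_cubic b x = -((x - \<phi>\<^sub>m)*(x - \<phi>\<^sub>p)*(x - r))"
  unfolding third_root_def using phim_bounds phip_bounds phi2_bounds
  by (intro orbit_cubic_factor) (auto simp: orbit_cubic_eq)

lemma third_root_less_phi1: "r < \<phi>\<^sub>1"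
proof -
  have "orbit_cubic b \<phi>\<^sub>1 < 0"
    using b_range phi1_bounds phi2_bounds by (simp add: orbit_cubic_eq bplus_def mult_pos_neg)
  moreover have "0 < (\<phi>\<^sub>1 - \<phi>\<^sub>m)*(\<phi>\<^sub>1 - \<phi>\<^sub>p)"
    using phim_bounds phip_bounds phi2_bounds by (intro mult_neg_neg) auto
  ultimately show ?thesis unfolding orbit_cubic_roots by (simp add: zero_less_mult_iff)
qed

lemma roots_order: "r < \<phi>\<^sub>m" "\<phi>\<^sub>m < \<phi>\<^sub>p" "\<phi>\<^sub>p < C1"
  using third_root_less_phi1 phim_bounds phip_bounds by auto

lemma C3_eq_product: "C3 = (C1 - \<phi>\<^sub>m)*(C1 - \<phi>\<^sub>p)*(C1 - r)"
  using orbit_cubic_roots[of C1] unfolding orbit_cubic_def by (simp add: algebra_simps)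

lemma period_integrand_eq:
  assumes "\<phi>\<^sub>m < x" "x < \<phi>\<^sub>p"
  shows "1 / sqrt (2*(b - V x)) = 1 / sqrt ((x - \<phi>\<^sub>m)*(\<phi>\<^sub>p - x)) * sqrt ((C1 - x)/(x - r))"
proof -
  have "x < C1" "0 < x - r" using assms roots_order by auto
  then have "2*(b - V x) = ((x - \<phi>\<^sub>m)*(\<phi>\<^sub>p - x)) * ((x - r)/(C1 - x))"
    using orbit_cubic_roots[of x] orbit_cubic_eq[of x b] by (simp add: field_simps)
  then show ?thesis
    using \<open>x < C1\<close> \<open>0 < x - r\<close> by (simp add: real_sqrt_mult real_sqrt_divide)
qed

definition angle :: "real \<Rightarrow> real" where
  "angle x = arccos ((\<phi>\<^sub>m + \<phi>\<^sub>p - 2*x)/(\<phi>\<^sub>p - \<phi>\<^sub>m))"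

definition position :: "real \<Rightarrow> real" where
  "position t = (\<phi>\<^sub>m + \<phi>\<^sub>p)/2 - (\<phi>\<^sub>p - \<phi>\<^sub>m)/2 * cos t"

definition angle_integrand :: "real \<Rightarrow> real" where
  "angle_integrand t = sqrt ((C1 - position t)/(position t - r))"

lemma position_bounds: "\<phi>\<^sub>m \<le> position t" "position t \<le> \<phi>\<^sub>p"
proof -
  have "position t - \<phi>\<^sub>m = (\<phi>\<^sub>p - \<phi>\<^sub>m)/2*(1 - cos t)" "\<phi>\<^sub>p - position t = (\<phi>\<^sub>p - \<phi>\<^sub>m)/2*(1 + cos t)"
    unfolding position_def by (simp_all add: field_simps)
  moreover have "0 \<le> 1 - cos t" "0 \<le> 1 + cos t" using cos_le_one[of t] cos_ge_minus_one[of t] by linarith+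
  moreover have "0 \<le> (\<phi>\<^sub>p - \<phi>\<^sub>m)/2*(1 - cos t)" "0 \<le> (\<phi>\<^sub>p - \<phi>\<^sub>m)/2*(1 + cos t)"
    using calculation(3,4) roots_order by simp_all
  ultimately show "\<phi>\<^sub>m \<le> position t" "position t \<le> \<phi>\<^sub>p" by linarith+
qed

lemma angle_integrand_continuous_on: "continuous_on S angle_integrand"
proof -
  have "position t - r \<noteq> 0" for t using position_bounds[of t] roots_order by auto
  then show ?thesis
    unfolding angle_integrand_def[abs_def] position_def[abs_def] by (intro continuous_intros) auto
qed

lemma angle_arg_bounds:
  "x \<in> {\<phi>\<^sub>m..\<phi>\<^sub>p} \<Longrightarrow>
    -1 \<le> (\<phi>\<^sub>m + \<phi>\<^sub>p - 2*x)/(\<phi>\<^sub>p - \<phi>\<^sub>m) \<and> (\<phi>\<^sub>m + \<phi>\<^sub>p - 2*x)/(\<phi>\<^sub>p - \<phi>\<^sub>m) \<le> 1"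
  using roots_order by (auto simp: field_simps)

lemma position_angle: "x \<in> {\<phi>\<^sub>m..\<phi>\<^sub>p} \<Longrightarrow> position (angle x) = x"
  unfolding position_def angle_def using angle_arg_bounds[of x] roots_order
  by (simp add: cos_arccos field_simps)

lemma angle_has_derivative:
  assumes "\<phi>\<^sub>m < x" "x < \<phi>\<^sub>p"
  shows "(angle has_real_derivative (1 / sqrt ((x - \<phi>\<^sub>m)*(\<phi>\<^sub>p - x)))) (at x)"
proof -
  define d where "d = \<phi>\<^sub>p - \<phi>\<^sub>m"
  define v where "v = (\<phi>\<^sub>m + \<phi>\<^sub>p - 2*x)/d"
  have d: "0 < d" unfolding d_def using roots_order by simp
  have v: "-1 < v" "v < 1" unfolding v_def using assms d by (auto simp: d_def field_simps)
  have "v^2 = (\<phi>\<^sub>m + \<phi>\<^sub>p - 2*x)^2/d^2" by (simp add: v_def power_divide)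
  moreover have "(1::real) = d^2/d^2" using d by simp
  ultimately have "1 - v^2 = (d^2 - (\<phi>\<^sub>m + \<phi>\<^sub>p - 2*x)^2)/d^2" by (simp add: diff_divide_distrib)
  moreover have "d^2 - (\<phi>\<^sub>m + \<phi>\<^sub>p - 2*x)^2 = 4*((x - \<phi>\<^sub>m)*(\<phi>\<^sub>p - x))"
    unfolding d_def by (simp add: power2_eq_square algebra_simps)
  moreover have "(2/d)^2 * ((x - \<phi>\<^sub>m)*(\<phi>\<^sub>p - x)) = 4*((x - \<phi>\<^sub>m)*(\<phi>\<^sub>p - x))/d^2"
    by (simp add: power_divide)
  ultimately have "1 - v^2 = (2/d)^2 * ((x - \<phi>\<^sub>m)*(\<phi>\<^sub>p - x))" by simp
  then have "sqrt (1 - v^2) = 2/d * sqrt ((x - \<phi>\<^sub>m)*(\<phi>\<^sub>p - x))"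
    using d by (simp add: real_sqrt_mult)
  then have "inverse (- sqrt (1 - v^2)) * (-2/d) = 1 / sqrt ((x - \<phi>\<^sub>m)*(\<phi>\<^sub>p - x))"
    using d assms by (simp add: field_simps)
  moreover have "((\<lambda>x. (\<phi>\<^sub>m + \<phi>\<^sub>p - 2*x)/d) has_real_derivative (-2/d)) (at x)"
    using d by (auto intro!: derivative_eq_intros)
  moreover have "(arccos has_real_derivative inverse (- sqrt (1 - v^2))) (at ((\<phi>\<^sub>m + \<phi>\<^sub>p - 2*x)/d))"
    using DERIV_arccos[OF v] by (simp only: v_def)
  ultimately show ?thesis
    using DERIV_chain2 unfolding angle_def[abs_def] d_def by fastforce
qed

lemma period_eq_angle_integral: "period C1 C2 C3 b = 2 * integral {0..pi} angle_integrand"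
proof -
  have "(\<phi>\<^sub>m + \<phi>\<^sub>p - 2*\<phi>\<^sub>m)/(\<phi>\<^sub>p - \<phi>\<^sub>m) = 1" "(\<phi>\<^sub>m + \<phi>\<^sub>p - 2*\<phi>\<^sub>p)/(\<phi>\<^sub>p - \<phi>\<^sub>m) = -1"
    using roots_order by (simp_all add: field_simps)
  then have angle_ends: "angle \<phi>\<^sub>m = 0" "angle \<phi>\<^sub>p = pi" unfolding angle_def by simp_all
  have "((\<lambda>x. (1 / sqrt ((x - \<phi>\<^sub>m)*(\<phi>\<^sub>p - x))) *\<^sub>R angle_integrand (angle x)) has_integral
      integral {angle \<phi>\<^sub>m..angle \<phi>\<^sub>p} angle_integrand - integral {angle \<phi>\<^sub>p..angle \<phi>\<^sub>m} angle_integrand)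
      {\<phi>\<^sub>m..\<phi>\<^sub>p}"
  proof (rule has_integral_substitution_general[of "{\<phi>\<^sub>m, \<phi>\<^sub>p}" _ _ _ 0 pi])
    show "angle ` {\<phi>\<^sub>m..\<phi>\<^sub>p} \<subseteq> {0..pi}"
      using angle_arg_bounds by (auto simp: angle_def intro!: arccos_lbound arccos_ubound)
    show "continuous_on {\<phi>\<^sub>m..\<phi>\<^sub>p} angle"
      unfolding angle_def[abs_def] using angle_arg_bounds roots_order
      by (intro continuous_intros) auto
    show "\<And>x. x \<in> {\<phi>\<^sub>m..\<phi>\<^sub>p} - {\<phi>\<^sub>m, \<phi>\<^sub>p} \<Longrightarrow>
        (angle has_real_derivative (1 / sqrt ((x - \<phi>\<^sub>m)*(\<phi>\<^sub>p - x)))) (at x within {\<phi>\<^sub>m..\<phi>\<^sub>p})"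
      by (rule has_field_derivative_at_within, rule angle_has_derivative) auto
  qed (use roots_order angle_integrand_continuous_on in auto)
  then have "((\<lambda>x. 1 / sqrt ((x - \<phi>\<^sub>m)*(\<phi>\<^sub>p - x)) * angle_integrand (angle x)) has_integral
      integral {0..pi} angle_integrand) {\<phi>\<^sub>m..\<phi>\<^sub>p}"
    unfolding angle_ends by simp
  then have "((\<lambda>x. 1 / sqrt (2*(b - V x))) has_integral integral {0..pi} angle_integrand) {\<phi>\<^sub>m..\<phi>\<^sub>p}"
  proof (rule has_integral_spike_finite[of "{\<phi>\<^sub>m, \<phi>\<^sub>p}", rotated 2])
    fix x assume "x \<in> {\<phi>\<^sub>m..\<phi>\<^sub>p} - {\<phi>\<^sub>m, \<phi>\<^sub>p}"
    then have x: "\<phi>\<^sub>m < x" "x < \<phi>\<^sub>p" by auto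
    then have "angle_integrand (angle x) = sqrt ((C1 - x)/(x - r))"
      using position_angle[of x] by (simp add: angle_integrand_def)
    then show "1 / sqrt (2*(b - V x)) = 1 / sqrt ((x - \<phi>\<^sub>m)*(\<phi>\<^sub>p - x)) * angle_integrand (angle x)"
      using period_integrand_eq[OF x] by (simp only:)
  qed simp
  then show ?thesis unfolding period_def by (simp add: integral_unique)
qed

lemma period_eq_sym_integral:
  "period C1 C2 C3 b = integral {0..pi} (\<lambda>t. angle_integrand t + angle_integrand (pi - t))"
  using integral_symmetrise[OF angle_integrand_continuous_on pi_ge_zero]
  by (simp add: period_eq_angle_integral)

lemma angle_integrand_sym_continuous_on:
  "continuous_on {0..pi} (\<lambda>t. angle_integrand t + angle_integrand (pi - t))"
  by (intro continuous_on_add angle_integrand_continuous_on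
      continuous_on_compose2[OF angle_integrand_continuous_on[of UNIV]] continuous_intros) auto

lemma admissible_C1_minus_third_root: "admissible (2*C1 + C2) C3 (C1 - r)"
proof (rule admissible_of_roots)
  show "C3 = (C1 - \<phi>\<^sub>m)*(C1 - \<phi>\<^sub>p)*(C1 - r)" by (rule C3_eq_product)
  show "2*C1 + C2 = (C1 - \<phi>\<^sub>m) + (C1 - \<phi>\<^sub>p) + (C1 - r)" unfolding third_root_def by simp
qed (use roots_order in auto)

lemma angle_integrand_sym:
  "angle_integrand t + angle_integrand (pi - t) = sym_integrand (2*C1 + C2) C3 ((cos t)^2) (C1 - r)"
proof -
  define M where "M = C1 - (\<phi>\<^sub>m + \<phi>\<^sub>p)/2"
  define D where "D = (\<phi>\<^sub>p - \<phi>\<^sub>m)/2"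
  have "M = (2*C1 + C2 - (C1 - r))/2" unfolding M_def third_root_def by (simp add: field_simps)
  moreover have "D*\<bar>cos t\<bar> = sqrt ((cos t)^2 * (M^2 - C3/(C1 - r)))"
  proof -
    have "C3/(C1 - r) = (C1 - \<phi>\<^sub>m)*(C1 - \<phi>\<^sub>p)*(C1 - r)/(C1 - r)"
      using C3_eq_product by (rule arg_cong)
    also have "\<dots> = (C1 - \<phi>\<^sub>m)*(C1 - \<phi>\<^sub>p)" using roots_order by simp
    finally have "C3/(C1 - r) = (C1 - \<phi>\<^sub>m)*(C1 - \<phi>\<^sub>p)" .
    then have "M^2 - C3/(C1 - r) = D^2" unfolding M_def D_def by (simp add: power2_eq_square algebra_simps)
    then show ?thesis using roots_order by (simp add: D_def real_sqrt_mult)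
  qed
  ultimately have sym: "sym_integrand (2*C1 + C2) C3 ((cos t)^2) (C1 - r) =
      sqrt ((M + D*\<bar>cos t\<bar>)/(C1 - r - M - D*\<bar>cos t\<bar>)) + sqrt ((M - D*\<bar>cos t\<bar>)/(C1 - r - M + D*\<bar>cos t\<bar>))"
    by (rule sym_integrand_eq)
  have "angle_integrand t = sqrt ((M + D*cos t)/(C1 - r - M - D*cos t))"
    "angle_integrand (pi - t) = sqrt ((M - D*cos t)/(C1 - r - M + D*cos t))"
  proof -
    have "C1 - position t = M + D*cos t" "position t - r = C1 - r - M - D*cos t"
      "C1 - position (pi - t) = M - D*cos t" "position (pi - t) - r = C1 - r - M + D*cos t"
      unfolding position_def M_def D_def by (simp_all add: field_simps)
    then show "angle_integrand t = sqrt ((M + D*cos t)/(C1 - r - M - D*cos t))"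
      "angle_integrand (pi - t) = sqrt ((M - D*cos t)/(C1 - r - M + D*cos t))"
      unfolding angle_integrand_def by simp_all
  qed
  then show ?thesis
    unfolding sym by (cases "0 \<le> cos t") (simp_all add: abs_of_neg)
qed

end

lemma (in dgh_constants) third_root_strict_mono:
  assumes "bminus C1 C2 C3 < b1" "b1 < b2" "b2 < bplus C1 C2 C3"
  shows "dgh_orbit.third_root C1 C2 C3 b1 < dgh_orbit.third_root C1 C2 C3 b2"
proof -
  interpret O1: dgh_orbit C1 C2 C3 b1 using assms by unfold_locales auto
  interpret O2: dgh_orbit C1 C2 C3 b2 using assms by unfold_locales auto
  have "0 < orbit_cubic b2 O1.third_root"
    using orbit_cubic_shift[of b2 O1.third_root b1] O1.orbit_cubic_roots O1.roots_order assms(2)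
    by simp
  then have "(O1.third_root - phim C1 C2 C3 b2)*(O1.third_root - phip C1 C2 C3 b2)
      * (O1.third_root - O2.third_root) < 0"
    unfolding O2.orbit_cubic_roots by simp
  moreover have "0 < (O1.third_root - phim C1 C2 C3 b2)*(O1.third_root - phip C1 C2 C3 b2)"
    using O1.third_root_less_phi1 O2.phim_bounds O2.roots_order by (intro mult_neg_neg) auto
  ultimately show ?thesis by (smt (verit) mult_nonneg_nonneg)
qed

theorem lemma1:
  fixes C1 C2 C3 :: real
  assumes "C1 > C2" "C2 > 0" "0 < C3" "C3 < C3crit C1 C2"
  shows "strict_mono_on {bminus C1 C2 C3 <..< bplus C1 C2 C3} (period C1 C2 C3)"
proof (rule strict_mono_onI)
  interpret dgh_constants C1 C2 C3 using assms by unfold_locales auto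
  fix b1 b2 assume b: "b1 \<in> {bminus C1 C2 C3 <..< bplus C1 C2 C3}"
    "b2 \<in> {bminus C1 C2 C3 <..< bplus C1 C2 C3}" "b1 < b2"
  interpret O1: dgh_orbit C1 C2 C3 b1 using b by unfold_locales auto
  interpret O2: dgh_orbit C1 C2 C3 b2 using b by unfold_locales auto
  have r: "O1.third_root < O2.third_root" using third_root_strict_mono b by auto
  have "integral {0..pi} (\<lambda>t. O1.angle_integrand t + O1.angle_integrand (pi - t))
      < integral {0..pi} (\<lambda>t. O2.angle_integrand t + O2.angle_integrand (pi - t))"
  proof (rule integral_less_real[OF O1.angle_integrand_sym_continuous_on O2.angle_integrand_sym_continuous_on])
    have "pi/2 \<in> {0<..<pi}" using pi_gt_zero by simp
    then show "{0<..<pi} \<noteq> {}" by blast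
    fix t
    show "O1.angle_integrand t + O1.angle_integrand (pi - t) < O2.angle_integrand t + O2.angle_integrand (pi - t)"
      unfolding O1.angle_integrand_sym O2.angle_integrand_sym
      using sym_integrand_strict_decreasing[OF O2.admissible_C1_minus_third_root O1.admissible_C1_minus_third_root]
        r assms by (simp add: abs_square_le_1)
  qed
  then show "period C1 C2 C3 b1 < period C1 C2 C3 b2"
    unfolding O1.period_eq_sym_integral O2.period_eq_sym_integral .
qed

end
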